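(* Let $q$, $\Delta$, $A_E\in\mathbb{R}_{\ge0}^{q\times q}$ and $A_V\in\mathbb{R}_{\ge0}^q$ be constants. Then there is a constant $b=b_{q,\Delta,A_E,A_V}>0$ such that for every graph $G$ of maximum degree $\Delta$, every permissive spin system $(G,q,A_E,A_V)$ is $b$-marginally bounded.
   Context: A spin system $(G,q,A_E,A_V)$ on $G=(V,E)$ assigns to $\sigma\in[q]^V$ the weight $w(\sigma)=\prod_{\{u,v\}\in E}A_E(\sigma(u),\sigma(v))\prod_{v\in V}A_V(\sigma(v))$, with Gibbs distribution $\mu\propto w$. For $\Lambda\subseteq V$ and any (possibly infeasible) $\sigma\in[q]^\Lambda$, let $w^\sigma(\tau)=\mathbf 1[\tau|_\Lambda=\sigma]\prod_{v\notin\Lambda}A_V(\tau(v))\prod_{\{u,v\}\in E,u\notin\Lambda,v\in\Lambda}A_E(\tau(u),\sigma(v))\prod_{\{u,v\}\in E,u,v\notin\Lambda}A_E(\tau(u),\tau(v))$ for $\tau\in[q]^V$, $Z^\sigma=\sum_\tau w^\sigma(\tau)$ and $\mu^\sigma=w^\sigma/Z^\sigma$. The system is permissive if $Z^\sigma>0$ for all $\Lambda\subseteq V$ and $\sigma\in[q]^\Lambda$. Let $\mu^\sigma_v$ be the marginal of $\mu^\sigma$ at $v$. The system is $b$-marginally bounded if for every $\Lambda\subseteq V$, $\sigma\in[q]^\Lambda$, $v\notin\Lambda$ and $c\in[q]$ with $\mu^\sigma_v(c)>0$, one has $\mu^\sigma_v(c)\ge b$. *)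

theory Defs
  imports Complex_Main "HOL-Library.FuncSet"
begin

text \<open>Graphs: a finite vertex set V (vertices are naturals) and a set E of edges,
  each unordered edge {u,v} being represented by exactly one orientation (u,v).
  Spins are 0..q-1 (i.e. [q] shifted). The edge interaction of an edge (u,v) is
  A_E(spin u, spin v); for symmetric A_E the orientation is irrelevant.\<close>

definition simple_graph :: "nat set \<Rightarrow> (nat \<times> nat) set \<Rightarrow> bool" where
  "simple_graph V E \<longleftrightarrow> finite V \<and> E \<subseteq> V \<times> V \<and>
     (\<forall>u v. (u, v) \<in> E \<longrightarrow> u \<noteq> v \<and> (v, u) \<notin> E)"

definition degree :: "(nat \<times> nat) set \<Rightarrow> nat \<Rightarrow> nat" where
  "degree E v = card {u. (u, v) \<in> E \<or> (v, u) \<in> E}"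

definition max_degree_le :: "nat set \<Rightarrow> (nat \<times> nat) set \<Rightarrow> nat \<Rightarrow> bool" where
  "max_degree_le V E \<Delta> \<longleftrightarrow> (\<forall>v\<in>V. degree E v \<le> \<Delta>)"

definition configs :: "nat \<Rightarrow> nat set \<Rightarrow> (nat \<Rightarrow> nat) set" where
  "configs q S = PiE S (\<lambda>_. {..<q})"

definition wcond ::
  "nat set \<Rightarrow> (nat \<times> nat) set \<Rightarrow> (nat \<Rightarrow> nat \<Rightarrow> real) \<Rightarrow> (nat \<Rightarrow> real)
     \<Rightarrow> nat set \<Rightarrow> (nat \<Rightarrow> nat) \<Rightarrow> (nat \<Rightarrow> nat) \<Rightarrow> real" where
  "wcond V E AE AV \<Lambda> \<sigma> \<tau> =
     (if (\<forall>v\<in>\<Lambda>. \<tau> v = \<sigma> v) then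
        (\<Prod>v\<in>V - \<Lambda>. AV (\<tau> v)) *
        (\<Prod>e\<in>E. if fst e \<in> \<Lambda> \<and> snd e \<in> \<Lambda> then 1 else AE (\<tau> (fst e)) (\<tau> (snd e)))
      else 0)"

definition Zcond ::
  "nat \<Rightarrow> nat set \<Rightarrow> (nat \<times> nat) set \<Rightarrow> (nat \<Rightarrow> nat \<Rightarrow> real) \<Rightarrow> (nat \<Rightarrow> real)
     \<Rightarrow> nat set \<Rightarrow> (nat \<Rightarrow> nat) \<Rightarrow> real" where
  "Zcond q V E AE AV \<Lambda> \<sigma> = (\<Sum>\<tau>\<in>configs q V. wcond V E AE AV \<Lambda> \<sigma> \<tau>)"

definition marginal ::
  "nat \<Rightarrow> nat set \<Rightarrow> (nat \<times> nat) set \<Rightarrow> (nat \<Rightarrow> nat \<Rightarrow> real) \<Rightarrow> (nat \<Rightarrow> real)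
     \<Rightarrow> nat set \<Rightarrow> (nat \<Rightarrow> nat) \<Rightarrow> nat \<Rightarrow> nat \<Rightarrow> real" where
  "marginal q V E AE AV \<Lambda> \<sigma> v c =
     (\<Sum>\<tau>\<in>{\<tau>\<in>configs q V. \<tau> v = c}. wcond V E AE AV \<Lambda> \<sigma> \<tau>) / Zcond q V E AE AV \<Lambda> \<sigma>"

definition permissive ::
  "nat \<Rightarrow> nat set \<Rightarrow> (nat \<times> nat) set \<Rightarrow> (nat \<Rightarrow> nat \<Rightarrow> real) \<Rightarrow> (nat \<Rightarrow> real) \<Rightarrow> bool" where
  "permissive q V E AE AV \<longleftrightarrow>
     (\<forall>\<Lambda> \<sigma>. \<Lambda> \<subseteq> V \<longrightarrow> \<sigma> \<in> configs q \<Lambda> \<longrightarrow> Zcond q V E AE AV \<Lambda> \<sigma> > 0)"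

definition marginally_bounded ::
  "real \<Rightarrow> nat \<Rightarrow> nat set \<Rightarrow> (nat \<times> nat) set \<Rightarrow> (nat \<Rightarrow> nat \<Rightarrow> real) \<Rightarrow> (nat \<Rightarrow> real) \<Rightarrow> bool" where
  "marginally_bounded b q V E AE AV \<longleftrightarrow>
     (\<forall>\<Lambda> \<sigma> v c. \<Lambda> \<subseteq> V \<longrightarrow> \<sigma> \<in> configs q \<Lambda> \<longrightarrow> v \<in> V - \<Lambda> \<longrightarrow> c < q \<longrightarrow>
        marginal q V E AE AV \<Lambda> \<sigma> v c > 0 \<longrightarrow> marginal q V E AE AV \<Lambda> \<sigma> v c \<ge> b)"

end

theory Submission
  imports Defs
begin

(*
  Let \<mu>\<^sup>\<sigma>\<^sub>v(c) > 0, witnessed by a configuration \<tau>0 of nonzero weight with \<tau>0(v) = c, and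
  let S consist of v and its unpinned neighbours. Given any \<tau> of nonzero weight, permissiveness
  applied to the pinning that agrees with \<tau> off the unpinned neighbours and puts c on v yields
  \<tau>' which differs from \<tau> only on S, has \<tau>'(v) = c, and all of whose weight factors involving S
  are nonzero (those avoiding the unpinned neighbours are factors of \<tau>0 as well). There are at
  most (\<Delta>+1)\<^sup>2 such factors, each in {0} \<union> [m, M], where m and M bound the nonzero entries of
  A\<^sub>E and A\<^sub>V; hence w\<^sup>\<sigma>(\<tau>) \<le> (M/m)\<^bsup>(\<Delta>+1)\<^sup>2\<^esup> w\<^sup>\<sigma>(\<tau>'). Since \<tau> \<mapsto> \<tau>' is at most
  q\<^bsup>\<Delta>+1\<^esup>-to-one, Z\<^sup>\<sigma> \<le> (M/m)\<^bsup>(\<Delta>+1)\<^sup>2\<^esup> q\<^bsup>\<Delta>+1\<^esup> \<Sum>\<^bsub>\<tau>(v)=c\<^esub> w\<^sup>\<sigma>(\<tau>).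
*)

lemma prod_ge_power:
  fixes f :: "'a \<Rightarrow> 'b::linordered_idom"
  assumes "\<And>i. i \<in> A \<Longrightarrow> m \<le> f i" "0 \<le> m" "m \<le> 1" "card A \<le> k"
  shows "m ^ k \<le> prod f A"
proof -
  have "m ^ k \<le> m ^ card A"
    using assms(2-4) by (intro power_decreasing)
  also have "\<dots> = (\<Prod>i\<in>A. m)"
    by simp
  also have "\<dots> \<le> prod f A"
    using assms(1,2) by (intro prod_mono) auto
  finally show ?thesis .
qed

lemma sum_le_by_bounded_fibres:
  fixes w :: "'a \<Rightarrow> real"
  assumes "finite C" "finite B" "f ` C \<subseteq> B"
    and "\<And>y. y \<in> B \<Longrightarrow> 0 \<le> w y" "0 \<le> r"
    and "\<And>x. x \<in> C \<Longrightarrow> w x \<le> r * w (f x)"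
    and "\<And>y. card {x \<in> C. f x = y} \<le> k"
  shows "sum w C \<le> r * k * sum w B"
proof -
  have "sum w C \<le> (\<Sum>x\<in>C. r * w (f x))"
    using assms(6) by (rule sum_mono)
  also have "\<dots> = (\<Sum>y\<in>f ` C. \<Sum>x\<in>{x \<in> C. f x = y}. r * w (f x))"
    using assms(1) by (rule sum.image_gen)
  also have "\<dots> = (\<Sum>y\<in>f ` C. card {x \<in> C. f x = y} * (r * w y))"
    by (rule sum.cong) auto
  also have "\<dots> \<le> (\<Sum>y\<in>f ` C. k * (r * w y))"
    using assms(3-5,7) by (intro sum_mono mult_right_mono) auto
  also have "\<dots> \<le> (\<Sum>y\<in>B. k * (r * w y))"
    using assms(2-5) by (intro sum_mono2) auto
  also have "\<dots> = r * k * sum w B"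
    by (simp add: sum_distrib_left mult_ac)
  finally show ?thesis .
qed

lemma finite_nonneg_reals_bounds:
  fixes X :: "real set"
  assumes "finite X" "\<And>x. x \<in> X \<Longrightarrow> 0 \<le> x"
  obtains m M where "0 < m" "m \<le> 1" "1 \<le> M" "X \<subseteq> insert 0 {m..M}"
proof -
  define m where "m = Min (insert 1 (X - {0}))"
  define M where "M = Max (insert 1 X)"
  have "0 < m"
    using assms unfolding m_def by (subst Min_gr_iff) force+
  moreover have "m \<le> 1" "1 \<le> M"
    using assms(1) unfolding m_def M_def by simp_all
  moreover have "X \<subseteq> insert 0 {m..M}"
  proof
    fix x
    assume "x \<in> X"
    then show "x \<in> insert 0 {m..M}"
      using assms(1) unfolding m_def M_def by (cases "x = 0") (simp_all add: Min_le Max_ge)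
  qed
  ultimately show thesis
    by (rule that)
qed

lemma configs_less: "\<tau> \<in> configs q S \<Longrightarrow> x \<in> S \<Longrightarrow> \<tau> x < q"
  unfolding configs_def by auto

lemma configs_undefined: "\<tau> \<in> configs q S \<Longrightarrow> x \<notin> S \<Longrightarrow> \<tau> x = undefined"
  unfolding configs_def by (rule PiE_arb)

lemma card_fibre_le_configs:
  assumes "finite S" "S \<subseteq> V" "C \<subseteq> configs q V"
    and "\<And>x z. x \<in> C \<Longrightarrow> z \<notin> S \<Longrightarrow> f x z = x z"
  shows "card {x \<in> C. f x = y} \<le> q ^ card S"
proof -
  have "inj_on (\<lambda>x. restrict x S) {x \<in> C. f x = y}"
  proof (rule inj_onI, rule ext)
    fix x x' z
    assume x: "x \<in> {x \<in> C. f x = y}" and x': "x' \<in> {x \<in> C. f x = y}"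
      and eq: "restrict x S = restrict x' S"
    show "x z = x' z"
    proof (cases "z \<in> S")
      case True
      then show ?thesis using fun_cong[OF eq, of z] by simp
    next
      case False
      from x x' have "f x = y" "f x' = y" "x \<in> C" "x' \<in> C"
        by auto
      then show ?thesis
        using assms(4)[of x z] assms(4)[of x' z] False by simp
    qed
  qed
  moreover have "(\<lambda>x. restrict x S) ` {x \<in> C. f x = y} \<subseteq> configs q S"
    using assms(2,3) configs_less by (fastforce simp: configs_def)
  ultimately have "card {x \<in> C. f x = y} \<le> card (configs q S)"
    using assms(1) by (intro card_inj_on_le) (simp_all add: configs_def finite_PiE)
  also have "card (configs q S) = q ^ card S"
    using assms(1) by (simp add: configs_def card_PiE)
  finally show ?thesis .
qed

definition neighbours :: "(nat \<times> nat) set \<Rightarrow> nat \<Rightarrow> nat set" where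
  "neighbours E v = {u. (u, v) \<in> E \<or> (v, u) \<in> E}"

definition edges_at :: "(nat \<times> nat) set \<Rightarrow> nat set \<Rightarrow> (nat \<times> nat) set" where
  "edges_at E S = {e \<in> E. fst e \<in> S \<or> snd e \<in> S}"

definition local_weight ::
  "(nat \<times> nat) set \<Rightarrow> (nat \<Rightarrow> nat \<Rightarrow> real) \<Rightarrow> (nat \<Rightarrow> real) \<Rightarrow> nat set \<Rightarrow> (nat \<Rightarrow> nat) \<Rightarrow> real"
  where
  "local_weight E AE AV S \<tau> =
     (\<Prod>x\<in>S. AV (\<tau> x)) * (\<Prod>e\<in>edges_at E S. AE (\<tau> (fst e)) (\<tau> (snd e)))"

locale spin_system =
  fixes q :: nat and V :: "nat set" and E :: "(nat \<times> nat) set"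
    and AE :: "nat \<Rightarrow> nat \<Rightarrow> real" and AV :: "nat \<Rightarrow> real"
  assumes simple: "simple_graph V E"
begin

lemma finite_V: "finite V" and E_subset: "E \<subseteq> V \<times> V"
  using simple by (auto simp: simple_graph_def)

lemma edge_endpoints: "e \<in> E \<Longrightarrow> fst e \<in> V" "e \<in> E \<Longrightarrow> snd e \<in> V"
  using E_subset by auto

lemma edge_asym: "(u, v) \<in> E \<Longrightarrow> (v, u) \<notin> E"
  using simple by (auto simp: simple_graph_def)

lemma finite_E: "finite E"
  using finite_subset[OF E_subset] finite_V by blast

lemma neighbours_subset: "neighbours E v \<subseteq> V"
  using E_subset by (auto simp: neighbours_def)

lemma card_neighbours_le: "max_degree_le V E \<Delta> \<Longrightarrow> v \<in> V \<Longrightarrow> card (neighbours E v) \<le> \<Delta>"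
  by (simp add: max_degree_le_def degree_def neighbours_def)

lemma card_edges_at_le:
  assumes "max_degree_le V E \<Delta>" "S \<subseteq> V"
  shows "card (edges_at E S) \<le> \<Delta> * card S"
proof -
  have "card (edges_at E {s}) \<le> \<Delta>" if "s \<in> S" for s
  proof -
    let ?other = "\<lambda>e. if fst e = s then snd e else fst e"
    have "inj_on ?other (edges_at E {s})"
    proof (rule inj_onI)
      fix e e'
      assume "e \<in> edges_at E {s}" "e' \<in> edges_at E {s}" "?other e = ?other e'"
      then show "e = e'"
        using edge_asym by (cases e; cases e') (auto simp: edges_at_def split: if_splits)
    qed
    moreover have "?other ` edges_at E {s} \<subseteq> neighbours E s"
      by (auto simp: edges_at_def neighbours_def)
    ultimately have "card (edges_at E {s}) \<le> card (neighbours E s)"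
      using finite_subset[OF neighbours_subset finite_V] by (intro card_inj_on_le)
    also have "\<dots> \<le> \<Delta>"
      using assms that by (intro card_neighbours_le) auto
    finally show ?thesis .
  qed
  have "edges_at E S = (\<Union>s\<in>S. edges_at E {s})"
    by (auto simp: edges_at_def)
  then have "card (edges_at E S) \<le> (\<Sum>s\<in>S. card (edges_at E {s}))"
    using finite_subset[OF assms(2) finite_V] by (simp add: card_UN_le)
  also have "\<dots> \<le> (\<Sum>s\<in>S. \<Delta>)"
    using \<open>\<And>s. s \<in> S \<Longrightarrow> card (edges_at E {s}) \<le> \<Delta>\<close> by (rule sum_mono)
  finally show ?thesis
    by (simp add: mult.commute)
qed

lemma wcond_nonzero_iff:
  "wcond V E AE AV \<Lambda> \<sigma> \<tau> \<noteq> 0 \<longleftrightarrow>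
     (\<forall>x\<in>\<Lambda>. \<tau> x = \<sigma> x) \<and> (\<forall>x\<in>V - \<Lambda>. AV (\<tau> x) \<noteq> 0) \<and>
     (\<forall>e\<in>E. fst e \<notin> \<Lambda> \<or> snd e \<notin> \<Lambda> \<longrightarrow> AE (\<tau> (fst e)) (\<tau> (snd e)) \<noteq> 0)"
  using finite_V finite_E by (auto simp: wcond_def)

lemma local_weight_nonzero_iff:
  assumes "S \<subseteq> V"
  shows "local_weight E AE AV S \<tau> \<noteq> 0 \<longleftrightarrow>
     (\<forall>x\<in>S. AV (\<tau> x) \<noteq> 0) \<and> (\<forall>e\<in>edges_at E S. AE (\<tau> (fst e)) (\<tau> (snd e)) \<noteq> 0)"
proof -
  have "finite S" "finite (edges_at E S)"
    using finite_subset[OF assms finite_V] finite_subset[OF _ finite_E] by (auto simp: edges_at_def)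
  then show ?thesis
    by (simp add: local_weight_def)
qed

lemma wcond_local_weight_cross:
  assumes S: "S \<subseteq> V - \<Lambda>" and agree: "\<And>x. x \<notin> S \<Longrightarrow> \<tau>' x = \<tau> x"
  shows "wcond V E AE AV \<Lambda> \<sigma> \<tau> * local_weight E AE AV S \<tau>' =
         wcond V E AE AV \<Lambda> \<sigma> \<tau>' * local_weight E AE AV S \<tau>"
proof -
  define rest where "rest \<rho> =
    (\<Prod>x\<in>V - \<Lambda> - S. AV (\<rho> x)) *
    (\<Prod>e\<in>E - edges_at E S. if fst e \<in> \<Lambda> \<and> snd e \<in> \<Lambda> then 1 else AE (\<rho> (fst e)) (\<rho> (snd e)))"
    for \<rho> :: "nat \<Rightarrow> nat"
  have factor: "wcond V E AE AV \<Lambda> \<sigma> \<rho> =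
      (if \<forall>x\<in>\<Lambda>. \<rho> x = \<sigma> x then local_weight E AE AV S \<rho> * rest \<rho> else 0)" for \<rho>
  proof -
    let ?h = "\<lambda>e. if fst e \<in> \<Lambda> \<and> snd e \<in> \<Lambda> then 1 else AE (\<rho> (fst e)) (\<rho> (snd e))"
    have "(\<Prod>x\<in>V - \<Lambda>. AV (\<rho> x)) = (\<Prod>x\<in>V - \<Lambda> - S. AV (\<rho> x)) * (\<Prod>x\<in>S. AV (\<rho> x))"
      using S finite_V by (intro prod.subset_diff) auto
    moreover have "prod ?h E = prod ?h (E - edges_at E S) * prod ?h (edges_at E S)"
      using finite_E by (intro prod.subset_diff) (auto simp: edges_at_def)
    moreover have "prod ?h (edges_at E S) = (\<Prod>e\<in>edges_at E S. AE (\<rho> (fst e)) (\<rho> (snd e)))"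
      using S by (intro prod.cong) (auto simp: edges_at_def)
    ultimately show ?thesis
      by (simp add: wcond_def local_weight_def rest_def mult_ac)
  qed
  have "rest \<tau>' = rest \<tau>"
    unfolding rest_def using agree by (intro arg_cong2[where f = "(*)"] prod.cong) (auto simp: edges_at_def)
  moreover have "\<tau>' x = \<tau> x" if "x \<in> \<Lambda>" for x
    using S that by (intro agree) blast
  ultimately show ?thesis
    by (simp add: factor)
qed

lemma permissive_ex_wcond_nonzero:
  assumes "permissive q V E AE AV" "\<Lambda> \<subseteq> V" "\<sigma> \<in> configs q \<Lambda>"
  obtains \<tau> where "\<tau> \<in> configs q V" "wcond V E AE AV \<Lambda> \<sigma> \<tau> \<noteq> 0"
proof -
  have "Zcond q V E AE AV \<Lambda> \<sigma> > 0"
    using assms unfolding permissive_def by blast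
  then have "\<not> (\<forall>\<tau>\<in>configs q V. wcond V E AE AV \<Lambda> \<sigma> \<tau> = 0)"
    unfolding Zcond_def by (metis less_irrefl sum.neutral)
  then show ?thesis
    using that by blast
qed

lemma marginal_pos_ex_wcond_nonzero:
  assumes "marginal q V E AE AV \<Lambda> \<sigma> v c > 0"
  obtains \<tau> where "\<tau> \<in> configs q V" "\<tau> v = c" "wcond V E AE AV \<Lambda> \<sigma> \<tau> \<noteq> 0"
proof -
  have "(\<Sum>\<tau>\<in>{\<tau> \<in> configs q V. \<tau> v = c}. wcond V E AE AV \<Lambda> \<sigma> \<tau>) \<noteq> 0"
    using assms unfolding marginal_def by (metis div_0 less_irrefl)
  then have "\<not> (\<forall>\<tau>\<in>{\<tau> \<in> configs q V. \<tau> v = c}. wcond V E AE AV \<Lambda> \<sigma> \<tau> = 0)"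
    using sum.neutral by blast
  then show ?thesis
    using that by blast
qed

lemma card_closed_neighbourhood:
  assumes "max_degree_le V E \<Delta>" "v \<in> V" "U \<subseteq> neighbours E v"
  shows "card (insert v U) \<le> \<Delta> + 1"
    and "card (insert v U) + card (edges_at E (insert v U)) \<le> (\<Delta> + 1)\<^sup>2"
proof -
  have "finite U"
    using assms(3) finite_subset[OF neighbours_subset finite_V] by (rule finite_subset)
  then have "card (insert v U) \<le> Suc (card U)"
    by (simp add: card_insert_if)
  moreover have "card U \<le> card (neighbours E v)"
    using assms(3) finite_subset[OF neighbours_subset finite_V] by (rule card_mono[rotated])
  moreover have "card (neighbours E v) \<le> \<Delta>"
    using assms(1,2) by (rule card_neighbours_le)
  ultimately show card: "card (insert v U) \<le> \<Delta> + 1"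
    by linarith
  have "insert v U \<subseteq> V"
    using assms(2,3) neighbours_subset by blast
  then have "card (edges_at E (insert v U)) \<le> \<Delta> * card (insert v U)"
    by (rule card_edges_at_le[OF assms(1)])
  also have "\<dots> \<le> \<Delta> * (\<Delta> + 1)"
    using card by (rule mult_le_mono2)
  finally have "card (edges_at E (insert v U)) \<le> \<Delta> * (\<Delta> + 1)" .
  moreover have "(\<Delta> + 1)\<^sup>2 = (\<Delta> + 1) + \<Delta> * (\<Delta> + 1)"
    by (simp add: power2_eq_square)
  ultimately show "card (insert v U) + card (edges_at E (insert v U)) \<le> (\<Delta> + 1)\<^sup>2"
    using card by linarith
qed

lemma repinned_local_weight_nonzero:
  assumes v: "v \<in> V - \<Lambda>" and U: "U = neighbours E v - \<Lambda>"
    and \<tau>0: "wcond V E AE AV \<Lambda> \<sigma> \<tau>0 \<noteq> 0"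
    and \<tau>: "wcond V E AE AV (V - U) \<rho> \<tau> \<noteq> 0"
    and agree: "\<And>x. x \<in> insert v \<Lambda> \<Longrightarrow> \<tau> x = \<tau>0 x"
  shows "local_weight E AE AV (insert v U) \<tau> \<noteq> 0"
proof -
  have UV: "U \<subseteq> V"
    using U neighbours_subset by blast
  have \<tau>0_AE: "AE (\<tau>0 (fst e)) (\<tau>0 (snd e)) \<noteq> 0" if "e \<in> E" "fst e = v \<or> snd e = v" for e
    using \<tau>0 v that by (auto simp: wcond_nonzero_iff)
  have \<tau>_AE: "AE (\<tau> (fst e)) (\<tau> (snd e)) \<noteq> 0" if "e \<in> E" "fst e \<in> U \<or> snd e \<in> U" for e
    using \<tau> UV that by (auto simp: wcond_nonzero_iff)
  have "AV (\<tau> x) \<noteq> 0" if "x \<in> insert v U" for x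
    using that \<tau>0 \<tau> v UV agree by (auto simp: wcond_nonzero_iff)
  moreover have "AE (\<tau> (fst e)) (\<tau> (snd e)) \<noteq> 0" if e: "e \<in> edges_at E (insert v U)" for e
  proof (cases "fst e \<in> U \<or> snd e \<in> U")
    case True
    then show ?thesis
      using e \<tau>_AE by (auto simp: edges_at_def)
  next
    case False
    \<comment> \<open>an edge at v avoiding U ends in \<Lambda>, where \<tau> and \<tau>0 agree\<close>
    with e U have "fst e \<in> insert v \<Lambda>" "snd e \<in> insert v \<Lambda>" "fst e = v \<or> snd e = v"
      using edge_endpoints[of e] by (auto simp: edges_at_def neighbours_def)
    then show ?thesis
      using e agree \<tau>0_AE by (auto simp: edges_at_def)
  qed
  moreover have "insert v U \<subseteq> V"
    using v UV by blast
  ultimately show ?thesis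
    by (simp add: local_weight_nonzero_iff)
qed

lemma ex_repinned_config:
  assumes perm: "permissive q V E AE AV" and v: "v \<in> V - \<Lambda>"
    and \<tau>0: "\<tau>0 \<in> configs q V" "wcond V E AE AV \<Lambda> \<sigma> \<tau>0 \<noteq> 0"
    and \<tau>: "\<tau> \<in> configs q V" "wcond V E AE AV \<Lambda> \<sigma> \<tau> \<noteq> 0"
  obtains \<tau>' where "\<tau>' \<in> configs q V" "\<tau>' v = \<tau>0 v"
    "\<And>x. x \<notin> insert v (neighbours E v - \<Lambda>) \<Longrightarrow> \<tau>' x = \<tau> x"
    "local_weight E AE AV (insert v (neighbours E v - \<Lambda>)) \<tau>' \<noteq> 0"
proof -
  define U where "U = neighbours E v - \<Lambda>"
  define \<rho> where "\<rho> = restrict (\<tau>(v := \<tau>0 v)) (V - U)"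
  have "\<rho> \<in> configs q (V - U)"
    using configs_less[OF \<tau>(1)] configs_less[OF \<tau>0(1)] v unfolding \<rho>_def configs_def by auto
  then obtain \<tau>' where \<tau>': "\<tau>' \<in> configs q V" "wcond V E AE AV (V - U) \<rho> \<tau>' \<noteq> 0"
    using permissive_ex_wcond_nonzero[OF perm] by blast
  have pinned: "\<tau>' x = \<rho> x" if "x \<in> V - U" for x
    using \<tau>'(2) that by (simp add: wcond_nonzero_iff)
  have "v \<notin> U"
    using edge_asym by (auto simp: U_def neighbours_def)
  then have at_v: "\<tau>' v = \<tau>0 v"
    using pinned v by (simp add: \<rho>_def)
  have outside: "\<tau>' x = \<tau> x" if "x \<notin> insert v U" for x
  proof (cases "x \<in> V")
    case True
    then show ?thesis
      using pinned that by (simp add: \<rho>_def)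
  next
    case False
    then show ?thesis
      using configs_undefined \<tau>'(1) \<tau>(1) by metis
  qed
  have "\<tau>' x = \<tau>0 x" if "x \<in> insert v \<Lambda>" for x
  proof (cases "x = v")
    case False
    then have "x \<notin> insert v U"
      using that by (auto simp: U_def)
    then show ?thesis
      using outside that False \<tau>(2) \<tau>0(2) by (simp add: wcond_nonzero_iff)
  qed (use at_v in simp)
  then have "local_weight E AE AV (insert v U) \<tau>' \<noteq> 0"
    using v U_def \<tau>0(2) \<tau>'(2) by (intro repinned_local_weight_nonzero)
  with \<tau>'(1) at_v outside show ?thesis
    using that unfolding U_def by blast
qed

end

locale bounded_entries =
  fixes q :: nat and AE :: "nat \<Rightarrow> nat \<Rightarrow> real" and AV :: "nat \<Rightarrow> real" and m M :: real
  assumes m_pos: "0 < m" and m_le_1: "m \<le> 1" and M_ge_1: "1 \<le> M"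
    and AE_range: "\<And>i j. i < q \<Longrightarrow> j < q \<Longrightarrow> AE i j \<in> insert 0 {m..M}"
    and AV_range: "\<And>i. i < q \<Longrightarrow> AV i \<in> insert 0 {m..M}"
begin

lemma AE_bounds:
  assumes "i < q" "j < q"
  shows "0 \<le> AE i j" "AE i j \<le> M" "AE i j \<noteq> 0 \<Longrightarrow> m \<le> AE i j"
  using AE_range[OF assms] m_pos M_ge_1 by auto

lemma AV_bounds:
  assumes "i < q"
  shows "0 \<le> AV i" "AV i \<le> M" "AV i \<noteq> 0 \<Longrightarrow> m \<le> AV i"
  using AV_range[OF assms] m_pos M_ge_1 by auto

end

lemma ex_bounded_entries:
  assumes "\<forall>i<q. \<forall>j<q. AE i j \<ge> 0" "\<forall>i<q. AV i \<ge> 0"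
  obtains m M where "bounded_entries q AE AV m M"
proof -
  let ?X = "(\<lambda>(i, j). AE i j) ` ({..<q} \<times> {..<q}) \<union> AV ` {..<q}"
  have "finite ?X" "\<And>x. x \<in> ?X \<Longrightarrow> 0 \<le> x"
    using assms by auto
  then obtain m M where "0 < m" "m \<le> 1" "1 \<le> M" "?X \<subseteq> insert 0 {m..M}"
    by (rule finite_nonneg_reals_bounds)
  then have "bounded_entries q AE AV m M"
    by unfold_locales auto
  then show thesis
    by (rule that)
qed

locale bounded_spin_system = spin_system q V E AE AV + bounded_entries q AE AV m M
  for q V E AE AV m M
begin

lemma wcond_nonneg:
  assumes "\<tau> \<in> configs q V"
  shows "0 \<le> wcond V E AE AV \<Lambda> \<sigma> \<tau>"
proof -
  have "\<tau> x < q" if "x \<in> V" for x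
    using assms that by (rule configs_less)
  then have "0 \<le> AV (\<tau> x)" if "x \<in> V" for x
    using that AV_bounds(1) by blast
  moreover have "0 \<le> AE (\<tau> (fst e)) (\<tau> (snd e))" if "e \<in> E" for e
    using that edge_endpoints AE_bounds(1) \<open>\<And>x. x \<in> V \<Longrightarrow> \<tau> x < q\<close> by simp
  ultimately show ?thesis
    unfolding wcond_def by (auto intro!: mult_nonneg_nonneg prod_nonneg)
qed

lemma local_weight_bounds:
  assumes "S \<subseteq> V" "\<tau> \<in> configs q V" "card S + card (edges_at E S) \<le> k"
  shows "local_weight E AE AV S \<tau> \<le> M ^ k"
    and "local_weight E AE AV S \<tau> \<noteq> 0 \<Longrightarrow> m ^ k \<le> local_weight E AE AV S \<tau>"
proof -
  have spins: "\<tau> x < q" if "x \<in> V" for x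
    using assms(2) that by (rule configs_less)
  have AV_factor: "0 \<le> AV (\<tau> x) \<and> AV (\<tau> x) \<le> M \<and> (AV (\<tau> x) \<noteq> 0 \<longrightarrow> m \<le> AV (\<tau> x))"
      if "x \<in> S" for x
    using that assms(1) spins AV_bounds by blast
  have AE_factor: "0 \<le> AE (\<tau> (fst e)) (\<tau> (snd e)) \<and> AE (\<tau> (fst e)) (\<tau> (snd e)) \<le> M \<and>
      (AE (\<tau> (fst e)) (\<tau> (snd e)) \<noteq> 0 \<longrightarrow> m \<le> AE (\<tau> (fst e)) (\<tau> (snd e)))"
      if "e \<in> edges_at E S" for e
    using that edge_endpoints spins AE_bounds by (simp add: edges_at_def)
  have "local_weight E AE AV S \<tau> \<le> M ^ card S * M ^ card (edges_at E S)"
    unfolding local_weight_def using AV_factor AE_factor M_ge_1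
    by (intro mult_mono prod_le_power prod_nonneg) auto
  also have "\<dots> \<le> M ^ k"
    using assms(3) M_ge_1 by (simp add: power_add[symmetric] power_increasing)
  finally show "local_weight E AE AV S \<tau> \<le> M ^ k" .
  assume "local_weight E AE AV S \<tau> \<noteq> 0"
  then have nonzero: "\<forall>x\<in>S. AV (\<tau> x) \<noteq> 0" "\<forall>e\<in>edges_at E S. AE (\<tau> (fst e)) (\<tau> (snd e)) \<noteq> 0"
    using local_weight_nonzero_iff[OF assms(1)] by auto
  have "m ^ k \<le> m ^ card S * m ^ card (edges_at E S)"
    using assms(3) m_pos m_le_1 by (simp add: power_add[symmetric] power_decreasing)
  also have "\<dots> \<le> local_weight E AE AV S \<tau>"
    unfolding local_weight_def using AV_factor AE_factor nonzero m_pos m_le_1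
    by (intro mult_mono prod_ge_power prod_nonneg) auto
  finally show "m ^ k \<le> local_weight E AE AV S \<tau>" .
qed

lemma wcond_le_by_local_weight:
  assumes "S \<subseteq> V - \<Lambda>" "card S + card (edges_at E S) \<le> k"
    and "\<tau> \<in> configs q V" "\<tau>' \<in> configs q V" "\<And>x. x \<notin> S \<Longrightarrow> \<tau>' x = \<tau> x"
    and "local_weight E AE AV S \<tau>' \<noteq> 0"
  shows "wcond V E AE AV \<Lambda> \<sigma> \<tau> \<le> (M / m) ^ k * wcond V E AE AV \<Lambda> \<sigma> \<tau>'"
proof -
  have SV: "S \<subseteq> V"
    using assms(1) by blast
  have "wcond V E AE AV \<Lambda> \<sigma> \<tau> * m ^ k \<le> wcond V E AE AV \<Lambda> \<sigma> \<tau> * local_weight E AE AV S \<tau>'"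
    using local_weight_bounds(2)[OF SV assms(4,2,6)] wcond_nonneg[OF assms(3)] by (rule mult_left_mono)
  also have "\<dots> = wcond V E AE AV \<Lambda> \<sigma> \<tau>' * local_weight E AE AV S \<tau>"
    using assms(1,5) by (rule wcond_local_weight_cross)
  also have "\<dots> \<le> wcond V E AE AV \<Lambda> \<sigma> \<tau>' * M ^ k"
    using local_weight_bounds(1)[OF SV assms(3,2)] wcond_nonneg[OF assms(4)] by (rule mult_left_mono)
  finally show ?thesis
    using m_pos by (simp add: power_divide field_simps)
qed

lemma Zcond_le_by_repinning:
  assumes deg: "max_degree_le V E \<Delta>" and perm: "permissive q V E AE AV" and v: "v \<in> V - \<Lambda>"
    and \<tau>0: "\<tau>0 \<in> configs q V" "wcond V E AE AV \<Lambda> \<sigma> \<tau>0 \<noteq> 0"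
  shows "Zcond q V E AE AV \<Lambda> \<sigma> \<le> (M / m) ^ (\<Delta> + 1)\<^sup>2 * real q ^ (\<Delta> + 1) *
           (\<Sum>\<tau>\<in>{\<tau> \<in> configs q V. \<tau> v = \<tau>0 v}. wcond V E AE AV \<Lambda> \<sigma> \<tau>)"
proof -
  define S where "S = insert v (neighbours E v - \<Lambda>)"
  define w where "w = wcond V E AE AV \<Lambda> \<sigma>"
  define C where "C = {\<tau> \<in> configs q V. w \<tau> \<noteq> 0}"
  define A where "A = {\<tau> \<in> configs q V. \<tau> v = \<tau>0 v}"
  define r where "r = (M / m) ^ (\<Delta> + 1)\<^sup>2"
  have finite_configs: "finite (configs q V)"
    using finite_V by (simp add: configs_def finite_PiE)
  have S: "S \<subseteq> V - \<Lambda>" "card S \<le> \<Delta> + 1" "card S + card (edges_at E S) \<le> (\<Delta> + 1)\<^sup>2"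
    using v neighbours_subset card_closed_neighbourhood[OF deg, of v "neighbours E v - \<Lambda>"]
    unfolding S_def by auto
  have "\<exists>\<tau>'. \<tau>' \<in> configs q V \<and> \<tau>' v = \<tau>0 v \<and> (\<forall>x. x \<notin> S \<longrightarrow> \<tau>' x = \<tau> x) \<and>
      local_weight E AE AV S \<tau>' \<noteq> 0" if "\<tau> \<in> C" for \<tau>
  proof -
    from that have "\<tau> \<in> configs q V" "wcond V E AE AV \<Lambda> \<sigma> \<tau> \<noteq> 0"
      by (simp_all add: C_def w_def)
    then obtain \<tau>' where "\<tau>' \<in> configs q V" "\<tau>' v = \<tau>0 v" "\<And>x. x \<notin> S \<Longrightarrow> \<tau>' x = \<tau> x"
        "local_weight E AE AV S \<tau>' \<noteq> 0"
      using ex_repinned_config[OF perm v \<tau>0] unfolding S_def by blast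
    then show ?thesis
      by blast
  qed
  then obtain F where F: "\<And>\<tau>. \<tau> \<in> C \<Longrightarrow> F \<tau> \<in> configs q V \<and> F \<tau> v = \<tau>0 v \<and>
      (\<forall>x. x \<notin> S \<longrightarrow> F \<tau> x = \<tau> x) \<and> local_weight E AE AV S (F \<tau>) \<noteq> 0"
    by metis
  have "Zcond q V E AE AV \<Lambda> \<sigma> = sum w C"
    unfolding Zcond_def w_def C_def using finite_configs by (intro sum.mono_neutral_right) auto
  also have "\<dots> \<le> r * (q ^ (\<Delta> + 1)) * sum w A"
  proof (rule sum_le_by_bounded_fibres)
    show "finite C" "finite A"
      using finite_configs by (simp_all add: C_def A_def)
    show "F ` C \<subseteq> A" "0 \<le> r"
      using F m_pos M_ge_1 by (auto simp: A_def r_def)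
    show "0 \<le> w \<tau>" if "\<tau> \<in> A" for \<tau>
      using that wcond_nonneg unfolding A_def w_def by blast
    show "w \<tau> \<le> r * w (F \<tau>)" if "\<tau> \<in> C" for \<tau>
      using wcond_le_by_local_weight[OF S(1,3)] that F unfolding C_def r_def w_def by blast
    have "card {\<tau> \<in> C. F \<tau> = \<tau>'} \<le> q ^ card S" for \<tau>'
      using S(1) F finite_subset[OF S(1)] finite_V
      by (intro card_fibre_le_configs[where V = V]) (auto simp: C_def)
    moreover have "0 < q"
      using configs_less[OF \<tau>0(1)] v by force
    then have "q ^ card S \<le> q ^ (\<Delta> + 1)"
      using S(2) by (intro power_increasing) auto
    ultimately show "card {\<tau> \<in> C. F \<tau> = \<tau>'} \<le> q ^ (\<Delta> + 1)" for \<tau>'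
      by (meson le_trans)
  qed
  finally show ?thesis
    by (simp add: r_def w_def A_def)
qed

lemma marginal_lower_bound:
  assumes deg: "max_degree_le V E \<Delta>" and perm: "permissive q V E AE AV"
    and \<Lambda>: "\<Lambda> \<subseteq> V" "\<sigma> \<in> configs q \<Lambda>" and v: "v \<in> V - \<Lambda>"
    and pos: "marginal q V E AE AV \<Lambda> \<sigma> v c > 0"
  shows "(m / M) ^ (\<Delta> + 1)\<^sup>2 / real q ^ (\<Delta> + 1) \<le> marginal q V E AE AV \<Lambda> \<sigma> v c"
proof -
  define r where "r = (M / m) ^ (\<Delta> + 1)\<^sup>2 * real q ^ (\<Delta> + 1)"
  define s where "s = (\<Sum>\<tau>\<in>{\<tau> \<in> configs q V. \<tau> v = c}. wcond V E AE AV \<Lambda> \<sigma> \<tau>)"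
  obtain \<tau>0 where \<tau>0: "\<tau>0 \<in> configs q V" "\<tau>0 v = c" "wcond V E AE AV \<Lambda> \<sigma> \<tau>0 \<noteq> 0"
    using marginal_pos_ex_wcond_nonzero[OF pos] by blast
  have "0 < q"
    using configs_less[OF \<tau>0(1)] v by force
  then have "0 < r"
    using m_pos M_ge_1 by (simp add: r_def)
  moreover have "Zcond q V E AE AV \<Lambda> \<sigma> \<le> r * s"
    using Zcond_le_by_repinning[OF deg perm v \<tau>0(1,3)] \<tau>0(2) by (simp add: r_def s_def)
  moreover have "0 < Zcond q V E AE AV \<Lambda> \<sigma>"
    using perm \<Lambda> unfolding permissive_def by blast
  ultimately have "1 / r \<le> s / Zcond q V E AE AV \<Lambda> \<sigma>"
    by (simp add: divide_simps mult.commute)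
  then show ?thesis
    using m_pos M_ge_1 by (simp add: r_def s_def marginal_def power_divide)
qed

lemma marginally_bounded_uniform:
  assumes "max_degree_le V E \<Delta>" "permissive q V E AE AV"
  shows "marginally_bounded ((m / M) ^ (\<Delta> + 1)\<^sup>2 / (real q + 1) ^ (\<Delta> + 1)) q V E AE AV"
  unfolding marginally_bounded_def
proof (intro allI impI)
  fix \<Lambda> \<sigma> v c
  assume \<Lambda>: "\<Lambda> \<subseteq> V" "\<sigma> \<in> configs q \<Lambda>" and v: "v \<in> V - \<Lambda>" and "c < q"
    and pos: "0 < marginal q V E AE AV \<Lambda> \<sigma> v c"
  \<comment> \<open>q + 1 rather than q keeps the bound positive when q = 0\<close>
  have "(m / M) ^ (\<Delta> + 1)\<^sup>2 / (real q + 1) ^ (\<Delta> + 1) \<le> (m / M) ^ (\<Delta> + 1)\<^sup>2 / real q ^ (\<Delta> + 1)"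
    using \<open>c < q\<close> m_pos M_ge_1 by (intro divide_left_mono mult_pos_pos power_mono) auto
  also have "\<dots> \<le> marginal q V E AE AV \<Lambda> \<sigma> v c"
    using assms \<Lambda> v pos by (rule marginal_lower_bound)
  finally show "(m / M) ^ (\<Delta> + 1)\<^sup>2 / (real q + 1) ^ (\<Delta> + 1) \<le> marginal q V E AE AV \<Lambda> \<sigma> v c" .
qed

end

theorem mainTheorem4:
  fixes q \<Delta> :: nat and AE :: "nat \<Rightarrow> nat \<Rightarrow> real" and AV :: "nat \<Rightarrow> real"
  assumes "\<forall>i<q. \<forall>j<q. AE i j \<ge> 0"
    and "\<forall>i<q. AV i \<ge> 0"
  shows "\<exists>b>0. \<forall>V E. simple_graph V E \<longrightarrow> max_degree_le V E \<Delta> \<longrightarrow>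
           permissive q V E AE AV \<longrightarrow> marginally_bounded b q V E AE AV"
proof -
  obtain m M where bounds: "bounded_entries q AE AV m M"
    using ex_bounded_entries[OF assms] by blast
  define b where "b = (m / M) ^ (\<Delta> + 1)\<^sup>2 / (real q + 1) ^ (\<Delta> + 1)"
  have "0 < b"
    using bounded_entries.m_pos[OF bounds] bounded_entries.M_ge_1[OF bounds] unfolding b_def
    by (intro divide_pos_pos zero_less_power) auto
  moreover have "marginally_bounded b q V E AE AV"
    if "simple_graph V E" "max_degree_le V E \<Delta>" "permissive q V E AE AV" for V E
  proof -
    have "bounded_spin_system q V E AE AV m M"
      using that(1) bounds by (simp add: bounded_spin_system_def spin_system_def)
    then show ?thesis
      unfolding b_def using that(2,3) by (rule bounded_spin_system.marginally_bounded_uniform)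
  qed
  ultimately show ?thesis
    by blast
qed

end
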